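(* Let $G$ be an abelian group and let $(V,Y,\mathbf 1,\omega)$ be a simple vertex operator algebra graded by $G$, $V=\bigoplus_{g\in G}V^g$, such that $V^g\neq 0$ for all $g\in G$ and the fusion rules of the $V^0$-modules $V^g$ satisfy $N_{V^g,V^h}^{V^k}=\delta_{g+h,k}$ for all $g,h,k\in G$. Suppose $(V,\bar Y,\mathbf 1,\omega)$ is also a simple vertex operator algebra on the same underlying vector space, with the same vacuum and Virasoro vector, such that $\bar Y(u,z)=Y(u,z)$ for all $u\in V^0$. Then $(V,Y,\mathbf 1,\omega)$ and $(V,\bar Y,\mathbf 1,\omega)$ are isomorphic vertex operator algebras.
   Context: A vertex operator algebra $V$ is graded by an abelian group $G$ if $V=\bigoplus_{g\in G}V^g$ with $u_nv\in V^{g+h}$ for all $u\in V^g$, $v\in V^h$, $n\in\mathbb Z$ (where $Y(u,z)=\sum_n u_nz^{-n-1}$); then $V^0$ is a vertex operator subalgebra and each $V^g$ is a $V^0$-module. For weak modules $W_1,W_2,W_3$ of a vertex operator algebra $U$, an intertwining operator of type $\binom{W_3}{W_1\,W_2}$ is a linear map $I:W_1\to(\mathrm{Hom}(W_2,W_3))\{z\}$, $w\mapsto I(w,z)$ (formal series with complex powers of $z$), such that $I(w_1,z)w_2\in W_3\{z\}$, $[L(-1),I(w_1,z)]=\frac{d}{dz}I(w_1,z)$, and the Jacobi identity $z_0^{-1}\delta\!\left(\frac{z_1-z_2}{z_0}\right)Y(v,z_1)I(w_1,z_2)-z_0^{-1}\delta\!\left(\frac{z_2-z_1}{-z_0}\right)I(w_1,z_2)Y(v,z_1)=z_2^{-1}\delta\!\left(\frac{z_1-z_0}{z_2}\right)I(Y(v,z_0)w_1,z_2)$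 holds for $v\in U$. The fusion rule $N_{W_1,W_2}^{W_3}$ is the dimension of the space of such intertwining operators. *)

theory Defs
  imports Complex_Main "HOL-Library.Groups_Big_Fun"
begin

context
  fixes sc :: "complex \<Rightarrow> 'v::ab_group_add \<Rightarrow> 'v"  (infixr \<open>*\<^sub>C\<close> 75)
begin

text \<open>A vertex operator is
  encoded by its modes: Y u n v is u_n v, where Y(u,z) = sum_n u_n z^(-n-1).
  L(n) = omega_(n+1). An intertwining operator I of type (W3; W1 W2) is encoded by
  its modes with complex index: I w a x is w_(a) x, where
  I(w,z) = sum_a w_(a) z^(-a-1); it is normalised to be 0 outside W1 x W2.\<close>

definition clin :: "('v \<Rightarrow> 'v) \<Rightarrow> bool" where
  "clin f \<longleftrightarrow> (\<forall>a b x y. f (a *\<^sub>C x + b *\<^sub>C y) = a *\<^sub>C f x + b *\<^sub>C f y)"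

definition clin_on :: "'v set \<Rightarrow> ('v \<Rightarrow> 'v) \<Rightarrow> bool" where
  "clin_on A f \<longleftrightarrow> (\<forall>a b x y. x \<in> A \<longrightarrow> y \<in> A \<longrightarrow> f (a *\<^sub>C x + b *\<^sub>C y) = a *\<^sub>C f x + b *\<^sub>C f y)"

definition csubspace :: "'v set \<Rightarrow> bool" where
  "csubspace A \<longleftrightarrow> 0 \<in> A \<and> (\<forall>a b x y. x \<in> A \<longrightarrow> y \<in> A \<longrightarrow> a *\<^sub>C x + b *\<^sub>C y \<in> A)"

definition fin_dim_C :: "'v set \<Rightarrow> bool" where
  "fin_dim_C A \<longleftrightarrow> (\<exists>S. finite S \<and> A \<subseteq> {\<Sum>s\<in>S. c s *\<^sub>C s | c. True})"

abbreviation Vir :: "('v \<Rightarrow> int \<Rightarrow> 'v \<Rightarrow> 'v) \<Rightarrow> 'v \<Rightarrow> int \<Rightarrow> 'v \<Rightarrow> 'v" where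
  "Vir Y \<omega> n \<equiv> Y \<omega> (n + 1)"

text \<open>Component form (Borcherds identity) of the Jacobi identity for a vertex operator
  Y on a space, acting on w \<in> W, for u,v \<in> U. All sums are finitely supported.\<close>
definition borcherds_on ::
  "('v \<Rightarrow> int \<Rightarrow> 'v \<Rightarrow> 'v) \<Rightarrow> 'v set \<Rightarrow> 'v set \<Rightarrow> bool" where
  "borcherds_on Y U W \<longleftrightarrow>
    (\<forall>u\<in>U. \<forall>v\<in>U. \<forall>w\<in>W. \<forall>m n l :: int.
      Sum_any (\<lambda>i::nat. (of_int m gchoose i :: complex) *\<^sub>C Y (Y u (l + int i) v) (m + n - int i) w)
      = Sum_any (\<lambda>i::nat. ((-1) ^ i * (of_int l gchoose i) :: complex) *\<^sub>C
            (Y u (m + l - int i) (Y v (n + int i) w)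
             - ((-1::complex) powi l) *\<^sub>C Y v (n + l - int i) (Y u (m + int i) w))))"

definition VOA :: "('v \<Rightarrow> int \<Rightarrow> 'v \<Rightarrow> 'v) \<Rightarrow> 'v \<Rightarrow> 'v \<Rightarrow> bool" where
  "VOA Y one \<omega> \<longleftrightarrow>
    (\<forall>u n. clin (Y u n)) \<and> (\<forall>n v. clin (\<lambda>u. Y u n v)) \<and>
    (\<forall>u v. \<exists>N. \<forall>n\<ge>N. Y u n v = 0) \<and>
    (\<forall>n v. Y one n v = (if n = -1 then v else 0)) \<and>
    (\<forall>v n. n \<ge> 0 \<longrightarrow> Y v n one = 0) \<and> (\<forall>v. Y v (-1) one = v) \<and>
    borcherds_on Y UNIV UNIV \<and>
    (\<exists>c::complex. \<forall>m n :: int. \<forall>w.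
       Vir Y \<omega> m (Vir Y \<omega> n w) - Vir Y \<omega> n (Vir Y \<omega> m w)
       = of_int (m - n) *\<^sub>C Vir Y \<omega> (m + n) w
         + (if m + n = 0 then (of_int (m^3 - m) / 12 * c) *\<^sub>C w else 0)) \<and>
    (\<forall>u n. Y (Vir Y \<omega> (-1) u) n = (\<lambda>v. (- of_int n :: complex) *\<^sub>C Y u (n - 1) v)) \<and>
    (\<forall>v. \<exists>f::int \<Rightarrow> 'v. finite {n. f n \<noteq> 0} \<and>
         (\<forall>n. Vir Y \<omega> 0 (f n) = of_int n *\<^sub>C f n) \<and> v = Sum_any f) \<and>
    (\<forall>n::int. fin_dim_C {v. Vir Y \<omega> 0 v = of_int n *\<^sub>C v}) \<and>
    (\<exists>N::int. \<forall>n<N. {v. Vir Y \<omega> 0 v = of_int n *\<^sub>C v} = {0})"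

definition VOA_ideal :: "('v \<Rightarrow> int \<Rightarrow> 'v \<Rightarrow> 'v) \<Rightarrow> 'v set \<Rightarrow> bool" where
  "VOA_ideal Y I \<longleftrightarrow> csubspace I \<and>
     (\<forall>u v n. v \<in> I \<longrightarrow> Y u n v \<in> I \<and> Y v n u \<in> I)"

definition simple_VOA :: "('v \<Rightarrow> int \<Rightarrow> 'v \<Rightarrow> 'v) \<Rightarrow> 'v \<Rightarrow> 'v \<Rightarrow> bool" where
  "simple_VOA Y one \<omega> \<longleftrightarrow> VOA Y one \<omega> \<and>
     (\<forall>I. VOA_ideal Y I \<longrightarrow> I = {0} \<or> I = UNIV)"

definition G_graded ::
  "('v \<Rightarrow> int \<Rightarrow> 'v \<Rightarrow> 'v) \<Rightarrow> 'v \<Rightarrow> 'v \<Rightarrow> ('g::ab_group_add \<Rightarrow> 'v set) \<Rightarrow> bool" where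
  "G_graded Y one \<omega> Vg \<longleftrightarrow>
     (\<forall>g. csubspace (Vg g)) \<and>
     (\<forall>v. \<exists>!f::'g \<Rightarrow> 'v. finite {g. f g \<noteq> 0} \<and> (\<forall>g. f g \<in> Vg g) \<and> v = Sum_any f) \<and>
     (\<forall>g h u v n. u \<in> Vg g \<longrightarrow> v \<in> Vg h \<longrightarrow> Y u n v \<in> Vg (g + h)) \<and>
     one \<in> Vg 0 \<and> \<omega> \<in> Vg 0"

text \<open>Intertwining operators of type (W3; W1 W2) for the vertex operator algebra
  (U, Y restricted, one, omega) and U-modules W1, W2, W3 that are subspaces of V with
  module action given by Y.\<close>
definition intertwining ::
  "('v \<Rightarrow> int \<Rightarrow> 'v \<Rightarrow> 'v) \<Rightarrow> 'v \<Rightarrow> 'v set \<Rightarrow> 'v set \<Rightarrow> 'v set \<Rightarrow> 'v set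
    \<Rightarrow> ('v \<Rightarrow> complex \<Rightarrow> 'v \<Rightarrow> 'v) \<Rightarrow> bool" where
  "intertwining Y \<omega> U W1 W2 W3 I \<longleftrightarrow>
     (\<forall>w a x. (w \<notin> W1 \<or> x \<notin> W2) \<longrightarrow> I w a x = 0) \<and>
     (\<forall>w a x. I w a x \<in> W3) \<and>
     (\<forall>a x. x \<in> W2 \<longrightarrow> clin_on W1 (\<lambda>w. I w a x)) \<and>
     (\<forall>a w. w \<in> W1 \<longrightarrow> clin_on W2 (I w a)) \<and>
     (\<forall>w a x. \<exists>N::nat. \<forall>n\<ge>N. I w (a + of_nat n) x = 0) \<and>
     (\<forall>w\<in>W1. \<forall>x\<in>W2. \<forall>b.
        Vir Y \<omega> (-1) (I w b x) - I w b (Vir Y \<omega> (-1) x) = (- b) *\<^sub>C I w (b - 1) x) \<and>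
     (\<forall>v\<in>U. \<forall>w\<in>W1. \<forall>x\<in>W2. \<forall>m l :: int. \<forall>a :: complex.
      Sum_any (\<lambda>i::nat. (of_int m gchoose i :: complex) *\<^sub>C
                 I (Y v (l + int i) w) (of_int m + a - of_nat i) x)
      = Sum_any (\<lambda>i::nat. ((-1) ^ i * (of_int l gchoose i) :: complex) *\<^sub>C
            (Y v (m + l - int i) (I w (a + of_nat i) x)
             - ((-1::complex) powi l) *\<^sub>C I w (a + of_int l - of_nat i) (Y v (m + int i) x))))"

definition has_dim_C :: "('v \<Rightarrow> complex \<Rightarrow> 'v \<Rightarrow> 'v) set \<Rightarrow> nat \<Rightarrow> bool" where
  "has_dim_C S n \<longleftrightarrow> (\<exists>B. length B = n \<and>
     (\<forall>c. (\<lambda>w a x. \<Sum>i<n. c i *\<^sub>C (B!i) w a x) = (\<lambda>_ _ _. 0) \<longrightarrow> (\<forall>i<n. c i = 0)) \<and>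
     S = {(\<lambda>w a x. \<Sum>i<n. c i *\<^sub>C (B!i) w a x) | c. True})"

definition fusion_rule ::
  "('v \<Rightarrow> int \<Rightarrow> 'v \<Rightarrow> 'v) \<Rightarrow> 'v \<Rightarrow> 'v set \<Rightarrow> 'v set \<Rightarrow> 'v set \<Rightarrow> 'v set \<Rightarrow> nat \<Rightarrow> bool" where
  "fusion_rule Y \<omega> U W1 W2 W3 n \<longleftrightarrow> has_dim_C {I. intertwining Y \<omega> U W1 W2 W3 I} n"

definition VOA_iso ::
  "('v \<Rightarrow> int \<Rightarrow> 'v \<Rightarrow> 'v) \<Rightarrow> 'v \<Rightarrow> 'v \<Rightarrow>
   ('v \<Rightarrow> int \<Rightarrow> 'v \<Rightarrow> 'v) \<Rightarrow> 'v \<Rightarrow> 'v \<Rightarrow> ('v \<Rightarrow> 'v) \<Rightarrow> bool" where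
  "VOA_iso Y1 one1 \<omega>1 Y2 one2 \<omega>2 \<phi> \<longleftrightarrow>
     clin \<phi> \<and> bij \<phi> \<and> \<phi> one1 = one2 \<and> \<phi> \<omega>1 = \<omega>2 \<and>
     (\<forall>u n v. \<phi> (Y1 u n v) = Y2 (\<phi> u) n (\<phi> v))"

end

end

theory Submission
  imports Defs "HOL-Algebra.Generated_Groups"
begin

text \<open>The fusion rules force the two vertex operators to be proportional on each pair of graded
  pieces: projecting \<open>Ybar(u,z)v\<close> (\<open>u \<in> V\<^sup>g\<close>, \<open>v \<in> V\<^sup>h\<close>) to \<open>V\<^sup>k\<close> gives an
  intertwining operator of \<open>V\<^sup>0\<close>-modules, which vanishes for \<open>k \<noteq> g + h\<close> and is a multiple
  of the one obtained from \<open>Y\<close> for \<open>k = g + h\<close>. Hence \<open>Ybar(u,z)v = c(g,h) Y(u,z)v\<close> with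
  \<open>c(g,h) \<noteq> 0\<close>, both operators being nonzero by simplicity. The vacuum axioms, the commutator
  formula and associativity make \<open>c\<close> a normalized symmetric 2-cocycle on \<open>G\<close> with values in
  the nonzero complex numbers. As this group is divisible, characters of subgroups of abelian
  groups extend, so the abelian extension of \<open>G\<close> defined by \<open>c\<close> splits and
  \<open>c(g,h) = f(g+h) / (f(g) f(h))\<close>. Multiplying \<open>V\<^sup>g\<close> by \<open>f(g)\<close> is then an isomorphism.\<close>

section \<open>Extending characters with values in the nonzero complex numbers\<close>

lemma complex_nth_root_exists:
  assumes "(c::complex) \<noteq> 0" "n > 0"
  obtains t where "t ^ n = c"
proof -
  have "(\<lambda>z. (root n (norm c) * cis (Arg c / n)) * z) ` {z. z ^ n = 1} = {z. z ^ n = c}"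
    using bij_betw_imp_surj_on[OF bij_betw_nth_root_unity[OF assms]] by simp
  moreover have "(1::complex) \<in> {z. z ^ n = 1}" by simp
  ultimately show ?thesis using that by blast
qed

context group
begin

lemma subgroup_Union_chain:
  assumes "C \<noteq> {}" and sub: "\<And>H. H \<in> C \<Longrightarrow> subgroup H G"
    and chain: "\<And>H K. H \<in> C \<Longrightarrow> K \<in> C \<Longrightarrow> H \<subseteq> K \<or> K \<subseteq> H"
  shows "subgroup (\<Union>C) G"
proof
  show "\<Union>C \<subseteq> carrier G"
  proof
    fix x assume "x \<in> \<Union>C"
    then obtain H where "H \<in> C" "x \<in> H" by blast
    then show "x \<in> carrier G" using subgroup.mem_carrier[OF sub] by blast
  qed
  obtain H where H: "H \<in> C" using \<open>C \<noteq> {}\<close> by blast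
  then show "\<one> \<in> \<Union>C" using subgroup.one_closed[OF sub[OF H]] by blast
next
  fix x y assume "x \<in> \<Union>C" "y \<in> \<Union>C"
  then obtain H K where "H \<in> C" "x \<in> H" "K \<in> C" "y \<in> K" by blast
  then obtain L where L: "L \<in> C" "x \<in> L" "y \<in> L" using chain[of H K] by blast
  then show "x \<otimes> y \<in> \<Union>C" using subgroup.m_closed[OF sub[OF L(1)] L(2,3)] by blast
next
  fix x assume "x \<in> \<Union>C"
  then obtain H where H: "H \<in> C" "x \<in> H" by blast
  then show "inv x \<in> \<Union>C" using subgroup.m_inv_closed[OF sub[OF H(1)] H(2)] by blast
qed

lemma least_period_dvd:
  assumes S: "subgroup S G" and e: "e \<in> carrier G"
    and n: "n > 0" "e [^] int n \<in> S" and least: "\<And>m. 0 < m \<Longrightarrow> m < n \<Longrightarrow> e [^] int m \<notin> S"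
    and k: "e [^] k \<in> S"
  shows "int n dvd k"
proof -
  have "e [^] k = (e [^] int n) [^] (k div int n) \<otimes> e [^] (k mod int n)"
    using e by (simp add: int_pow_pow int_pow_mult[symmetric])
  then have "e [^] (k mod int n) = inv ((e [^] int n) [^] (k div int n)) \<otimes> e [^] k"
    using e by (simp add: m_assoc[symmetric])
  moreover have "(e [^] int n) [^] (k div int n) \<in> S"
    using n(2) S by (simp add: subgroup_int_pow_closed)
  ultimately have "e [^] int (nat (k mod int n)) \<in> S"
    using k n(1) S by (simp add: subgroup.m_closed subgroup.m_inv_closed)
  moreover have "nat (k mod int n) < n" using n(1) by (simp add: nat_less_iff)
  ultimately have "\<not> 0 < nat (k mod int n)" using least[of "nat (k mod int n)"] by blast
  then have "k mod int n = 0" using n(1) pos_mod_sign[of "int n" k] by linarith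
  then show ?thesis by (simp add: dvd_eq_mod_eq_0)
qed

end

lemma single_valued_Union_chain:
  assumes "\<And>R. R \<in> C \<Longrightarrow> single_valued R"
    and "\<And>R S. R \<in> C \<Longrightarrow> S \<in> C \<Longrightarrow> R \<subseteq> S \<or> S \<subseteq> R"
  shows "single_valued (\<Union>C)"
  unfolding single_valued_def
proof (intro allI impI)
  fix x a b assume "(x, a) \<in> \<Union>C" "(x, b) \<in> \<Union>C"
  then obtain R S where "R \<in> C" "(x, a) \<in> R" "S \<in> C" "(x, b) \<in> S" by blast
  then show "a = b" using assms unfolding single_valued_def by blast
qed

lemma single_valued_The_eq: "single_valued R \<Longrightarrow> (x, a) \<in> R \<Longrightarrow> (THE b. (x, b) \<in> R) = a"
  unfolding single_valued_def by blast

context comm_group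
begin

definition character_on :: "'a set \<Rightarrow> ('a \<Rightarrow> complex) \<Rightarrow> bool" where
  "character_on S r \<longleftrightarrow> subgroup S G \<and> (\<forall>x\<in>S. r x \<noteq> 0) \<and> (\<forall>x\<in>S. \<forall>y\<in>S. r (x \<otimes> y) = r x * r y)"

lemma character_onD:
  assumes "character_on S r"
  shows "subgroup S G" "x \<in> S \<Longrightarrow> r x \<noteq> 0" "x \<in> S \<Longrightarrow> y \<in> S \<Longrightarrow> r (x \<otimes> y) = r x * r y"
  using assms unfolding character_on_def by blast+

lemma character_on_one:
  assumes "character_on S r"
  shows "r \<one> = 1"
proof -
  have S1: "\<one> \<in> S" using subgroup.one_closed[OF character_onD(1)[OF assms]] .
  have "r \<one> * r \<one> = r \<one> * 1" using character_onD(3)[OF assms S1 S1] by simp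
  then show ?thesis using character_onD(2)[OF assms S1] by (metis mult_left_cancel)
qed

lemma character_on_inv:
  assumes r: "character_on S r" and x: "x \<in> S"
  shows "r (inv x) = inverse (r x)"
proof -
  have sS: "subgroup S G" by (rule character_onD(1)[OF r])
  have "r x * r (inv x) = 1"
    using character_onD(3)[OF r x subgroup.m_inv_closed[OF sS x]] character_on_one[OF r]
      subgroup.mem_carrier[OF sS x] by simp
  then show ?thesis by (metis inverse_unique)
qed

lemma character_on_int_pow:
  assumes r: "character_on S r" and x: "x \<in> S"
  shows "r (x [^] (k::int)) = r x powi k"
proof -
  have sS: "subgroup S G" by (rule character_onD(1)[OF r])
  have nat_pow: "x [^] n \<in> S \<and> r (x [^] n) = r x ^ n" for n :: nat
    by (induction n)
      (auto simp: character_on_one[OF r] subgroup.one_closed[OF sS] subgroup.m_closed[OF sS] x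
        character_onD(3)[OF r] subgroup.mem_carrier[OF sS x] nat_pow_mult[symmetric])
  show ?thesis
  proof (cases "k \<ge> 0")
    case True
    then obtain n where "k = int n" by (metis nonneg_int_cases)
    then show ?thesis using nat_pow by (simp add: int_pow_int)
  next
    case False
    then obtain n where n: "k = - int n" by (metis nonpos_int_cases not_le order_less_imp_le)
    have "x [^] k = inv (x [^] n)" using n subgroup.mem_carrier[OF sS x] by (simp add: int_pow_neg_int)
    then show ?thesis using nat_pow[of n] character_on_inv[OF r] n by (simp add: power_int_minus)
  qed
qed

text \<open>This is where the divisibility of the nonzero complex numbers enters: the \<open>k\<close> with
  \<open>e [^] k \<in> S\<close> are the multiples of some \<open>n\<close>, and \<open>t\<close> is an \<open>n\<close>-th root of
  \<open>r (e [^] n)\<close>.\<close>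

lemma character_on_compatible_root:
  assumes r: "character_on S r" and e: "e \<in> carrier G"
  obtains t where "t \<noteq> 0" "\<And>k. e [^] (k::int) \<in> S \<Longrightarrow> r (e [^] k) = t powi k"
proof (cases "\<exists>n::nat. n > 0 \<and> e [^] int n \<in> S")
  case False
  have "r (e [^] k) = 1 powi k" if "e [^] (k::int) \<in> S" for k
  proof -
    have "e [^] (- k) \<in> S"
      unfolding int_pow_neg[OF e] by (rule subgroup.m_inv_closed[OF character_onD(1)[OF r] that])
    then have "e [^] int (nat \<bar>k\<bar>) \<in> S" using that by (cases "k \<ge> 0") simp_all
    then have "\<not> nat \<bar>k\<bar> > 0" using False by meson
    then show ?thesis using character_on_one[OF r] by simp
  qed
  then show ?thesis using that[of 1] by simp
next
  case True
  define n where "n = (LEAST n::nat. n > 0 \<and> e [^] int n \<in> S)"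
  have n: "n > 0" "e [^] int n \<in> S"
    using LeastI_ex[OF True] unfolding n_def by auto
  have least: "e [^] int m \<notin> S" if "0 < m" "m < n" for m
    using not_less_Least[of m "\<lambda>n. n > 0 \<and> e [^] int n \<in> S"] that unfolding n_def[symmetric] by simp
  obtain t where t: "t ^ n = r (e [^] int n)"
    using complex_nth_root_exists[OF character_onD(2)[OF r n(2)] n(1)] by blast
  have "t \<noteq> 0" using t character_onD(2)[OF r n(2)] n(1) by (auto simp: power_0_left)
  moreover have "r (e [^] k) = t powi k" if k: "e [^] k \<in> S" for k
  proof -
    obtain q where q: "k = int n * q"
      using least_period_dvd[OF character_onD(1)[OF r] e n least k] by blast
    then have "r (e [^] k) = r ((e [^] int n) [^] q)" using e by (simp add: int_pow_pow)
    also have "\<dots> = t powi k"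
      using character_on_int_pow[OF r n(2)] t q by (simp add: power_int_mult)
    finally show ?thesis .
  qed
  ultimately show ?thesis using that by blast
qed

lemma int_pow_times_mult:
  assumes "e \<in> carrier G" "s \<in> carrier G" "s' \<in> carrier G"
  shows "(e [^] (k::int) \<otimes> s) \<otimes> (e [^] (k'::int) \<otimes> s') = e [^] (k + k') \<otimes> (s \<otimes> s')"
  using assms by (simp add: int_pow_mult m_ac)

lemma subgroup_adjoin:
  assumes S: "subgroup S G" and e: "e \<in> carrier G"
  shows "subgroup {e [^] (k::int) \<otimes> s | k s. s \<in> S} G"
proof
  show "{e [^] (k::int) \<otimes> s | k s. s \<in> S} \<subseteq> carrier G"
    using e subgroup.mem_carrier[OF S] by auto
  show "\<one> \<in> {e [^] (k::int) \<otimes> s | k s. s \<in> S}"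
    using subgroup.one_closed[OF S] e by (auto intro!: exI[of _ 0] exI[of _ \<one>])
next
  fix x y assume "x \<in> {e [^] (k::int) \<otimes> s | k s. s \<in> S}" "y \<in> {e [^] (k::int) \<otimes> s | k s. s \<in> S}"
  then show "x \<otimes> y \<in> {e [^] (k::int) \<otimes> s | k s. s \<in> S}"
    using int_pow_times_mult e subgroup.mem_carrier[OF S] subgroup.m_closed[OF S] by blast
next
  fix x assume "x \<in> {e [^] (k::int) \<otimes> s | k s. s \<in> S}"
  then obtain k s where x: "x = e [^] (k::int) \<otimes> s" "s \<in> S" by blast
  then have "inv x = e [^] (- k) \<otimes> inv s"
    using e subgroup.mem_carrier[OF S] by (simp add: inv_mult int_pow_neg m_comm)
  then show "inv x \<in> {e [^] (k::int) \<otimes> s | k s. s \<in> S}" using x(2) subgroup.m_inv_closed[OF S] by blast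
qed

lemma compatible_root_well_defined:
  assumes r: "character_on S r" and e: "e \<in> carrier G" and t: "t \<noteq> 0"
    and t_root: "\<And>k. e [^] (k::int) \<in> S \<Longrightarrow> r (e [^] k) = t powi k"
    and eq: "e [^] k \<otimes> s = e [^] k' \<otimes> s'" and s: "s \<in> S" "s' \<in> S"
  shows "t powi k * r s = t powi k' * r s'"
proof -
  have sS: "subgroup S G" by (rule character_onD(1)[OF r])
  have carrier: "s \<in> carrier G" "s' \<in> carrier G" "inv s \<in> carrier G"
    using s subgroup.mem_carrier[OF sS] by auto
  have "e [^] (k - k') = (e [^] k \<otimes> s) \<otimes> (e [^] (- k') \<otimes> inv s)"
    using int_pow_times_mult[OF e carrier(1,3), of k "- k'"] carrier e by simp
  also have "\<dots> = s' \<otimes> inv s"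
    using eq int_pow_times_mult[OF e carrier(2,3), of k' "- k'"] carrier by simp
  finally have "e [^] (k - k') = s' \<otimes> inv s" .
  then have "t powi (k - k') = r s' * inverse (r s)"
    using t_root[of "k - k'"] s subgroup.m_closed[OF sS] subgroup.m_inv_closed[OF sS]
      character_onD(3)[OF r] character_on_inv[OF r] by simp
  then show ?thesis
    using t character_onD(2)[OF r s(1)] by (simp add: power_int_diff field_simps)
qed

lemma character_on_extend_to_element:
  assumes r: "character_on S r" and e: "e \<in> carrier G"
  obtains S' r' where "character_on S' r'" "S \<subseteq> S'" "e \<in> S'" "\<forall>x\<in>S. r' x = r x"
proof -
  have sS: "subgroup S G" by (rule character_onD(1)[OF r])
  have SG: "s \<in> S \<Longrightarrow> s \<in> carrier G" for s using subgroup.mem_carrier[OF sS] .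
  obtain t where t: "t \<noteq> 0" and t_root: "\<And>k. e [^] (k::int) \<in> S \<Longrightarrow> r (e [^] k) = t powi k"
    using character_on_compatible_root[OF r e] by blast
  define S' where "S' = {e [^] (k::int) \<otimes> s | k s. s \<in> S}"
  define r' where "r' x = (SOME a. \<exists>k s. s \<in> S \<and> x = e [^] (k::int) \<otimes> s \<and> a = t powi k * r s)" for x
  have r'_eq: "r' (e [^] k \<otimes> s) = t powi k * r s" if "s \<in> S" for k s
  proof -
    have "(\<exists>k' s'. s' \<in> S \<and> e [^] k \<otimes> s = e [^] k' \<otimes> s' \<and> a = t powi k' * r s')
        \<longleftrightarrow> a = t powi k * r s" for a
      using that compatible_root_well_defined[OF r e t t_root] by metis
    then show ?thesis unfolding r'_def by simp
  qed
  have "character_on S' r'"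
    unfolding character_on_def
  proof (intro conjI ballI)
    show "subgroup S' G" unfolding S'_def by (rule subgroup_adjoin[OF sS e])
  next
    fix x assume "x \<in> S'"
    then show "r' x \<noteq> 0"
      unfolding S'_def using r'_eq t character_onD(2)[OF r] by auto
  next
    fix x y assume "x \<in> S'" "y \<in> S'"
    then show "r' (x \<otimes> y) = r' x * r' y"
      unfolding S'_def using int_pow_times_mult[OF e] SG r'_eq subgroup.m_closed[OF sS]
        character_onD(3)[OF r] t
      by (auto simp: power_int_add)
  qed
  moreover have in_S': "e [^] (k::int) \<otimes> s \<in> S'" if "s \<in> S" for k s
    unfolding S'_def using that by blast
  have "S \<subseteq> S'" using in_S'[of _ 0] SG by auto
  moreover have "e \<in> S'" using in_S'[OF subgroup.one_closed[OF sS], of 1] e by simp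
  moreover have "\<forall>x\<in>S. r' x = r x" using r'_eq[of _ 0] SG by simp
  ultimately show ?thesis using that by blast
qed

text \<open>Characters on subgroups are handled through their graphs, so that Zorn's lemma applies
  to the inclusion order.\<close>

definition character_graph :: "('a \<times> complex) set \<Rightarrow> bool" where
  "character_graph R \<longleftrightarrow> single_valued R \<and> character_on (Domain R) (\<lambda>x. THE a. (x, a) \<in> R)"

lemma character_on_cong:
  assumes "\<And>x. x \<in> S \<Longrightarrow> r x = r' x"
  shows "character_on S r \<longleftrightarrow> character_on S r'"
proof -
  have "(\<forall>x\<in>S. \<forall>y\<in>S. r (x \<otimes> y) = r x * r y) \<longleftrightarrow> (\<forall>x\<in>S. \<forall>y\<in>S. r' (x \<otimes> y) = r' x * r' y)"
    if "subgroup S G" using assms subgroup.m_closed[OF that] by simp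
  then show ?thesis using assms unfolding character_on_def by auto
qed

lemma character_graph_of:
  assumes "character_on S r"
  shows "character_graph {(x, r x) | x. x \<in> S}" (is "character_graph ?R")
proof -
  have "single_valued ?R" unfolding single_valued_def by blast
  moreover have "Domain ?R = S" by blast
  moreover have "(THE a. (x, a) \<in> ?R) = r x" if "x \<in> S" for x
    using that by (intro the_equality) auto
  then have "character_on S (\<lambda>x. THE a. (x, a) \<in> ?R)"
    using character_on_cong[of S "\<lambda>x. THE a. (x, a) \<in> ?R" r] assms by simp
  ultimately show ?thesis unfolding character_graph_def by simp
qed

lemma character_graph_Union_chain:
  assumes C: "C \<in> chains {R. character_graph R}" and "C \<noteq> {}"
  shows "character_graph (\<Union>C)"
proof -
  have sv_R: "single_valued R" and char_R: "character_on (Domain R) (\<lambda>x. THE a. (x, a) \<in> R)"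
    if "R \<in> C" for R
    using C that by (auto simp: chains_def character_graph_def)
  have chain: "R1 \<subseteq> R2 \<or> R2 \<subseteq> R1" if "R1 \<in> C" "R2 \<in> C" for R1 R2
    using C that by (auto simp: chains_def chain_subset_def)
  have sv: "single_valued (\<Union>C)" by (rule single_valued_Union_chain[OF sv_R chain])
  have The_eq: "(THE a. (x, a) \<in> \<Union>C) = (THE a. (x, a) \<in> R)" if R: "R \<in> C" "x \<in> Domain R" for x R
  proof -
    obtain a where a: "(x, a) \<in> R" using R(2) by blast
    then have "(x, a) \<in> \<Union>C" using R(1) by blast
    then show ?thesis
      using single_valued_The_eq[OF sv] single_valued_The_eq[OF sv_R[OF R(1)] a] by simp
  qed
  have "subgroup (Domain (\<Union>C)) G"
    unfolding Domain_Union
  proof (rule subgroup_Union_chain)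
    show "Domain ` C \<noteq> {}" using \<open>C \<noteq> {}\<close> by blast
    show "subgroup H G" if "H \<in> Domain ` C" for H
      using that character_onD(1)[OF char_R] by blast
    show "H \<subseteq> K \<or> K \<subseteq> H" if "H \<in> Domain ` C" "K \<in> Domain ` C" for H K
      using that chain Domain_mono by blast
  qed
  moreover have "(THE a. (x, a) \<in> \<Union>C) \<noteq> 0" if x: "x \<in> Domain (\<Union>C)" for x
  proof -
    obtain R where R: "R \<in> C" "x \<in> Domain R" using x by blast
    then show ?thesis using The_eq[OF R] character_onD(2)[OF char_R[OF R(1)] R(2)] by simp
  qed
  moreover have "(THE a. (x \<otimes> y, a) \<in> \<Union>C) = (THE a. (x, a) \<in> \<Union>C) * (THE a. (y, a) \<in> \<Union>C)"
    if xy: "x \<in> Domain (\<Union>C)" "y \<in> Domain (\<Union>C)" for x y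
  proof -
    obtain R1 R2 where "R1 \<in> C" "x \<in> Domain R1" "R2 \<in> C" "y \<in> Domain R2" using xy by blast
    then obtain R where R: "R \<in> C" "x \<in> Domain R" "y \<in> Domain R"
      using chain[of R1 R2] Domain_mono by blast
    then have "x \<otimes> y \<in> Domain R"
      using subgroup.m_closed[OF character_onD(1)[OF char_R[OF R(1)]]] by blast
    then show ?thesis using The_eq[OF R(1)] R character_onD(3)[OF char_R[OF R(1)] R(2,3)] by simp
  qed
  ultimately show ?thesis using sv unfolding character_graph_def character_on_def by blast
qed

lemma maximal_character_graph:
  assumes R0: "character_graph R0"
  obtains M where "character_graph M" "R0 \<subseteq> M" "\<And>R. character_graph R \<Longrightarrow> M \<subseteq> R \<Longrightarrow> R = M"
proof -
  define P where "P = {R. character_graph R \<and> R0 \<subseteq> R}"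
  have "\<exists>M\<in>P. \<forall>R\<in>P. M \<subseteq> R \<longrightarrow> R = M"
  proof (rule Zorn_Lemma2, intro ballI)
    fix C assume C: "C \<in> chains P"
    show "\<exists>U\<in>P. \<forall>R\<in>C. R \<subseteq> U"
    proof (cases "C = {}")
      case True
      have "R0 \<in> P" using R0 unfolding P_def by simp
      then show ?thesis using True by blast
    next
      case False
      have "C \<in> chains {R. character_graph R}"
        using C unfolding P_def chains_def chain_subset_def by auto
      then have "character_graph (\<Union>C)" using False by (rule character_graph_Union_chain)
      moreover obtain R where "R \<in> C" using False by blast
      then have "R0 \<subseteq> \<Union>C" using C unfolding P_def chains_def by auto
      ultimately show ?thesis unfolding P_def by blast
    qed
  qed
  then obtain M where M: "M \<in> P" and maximal: "\<And>R. R \<in> P \<Longrightarrow> M \<subseteq> R \<Longrightarrow> R = M"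
    by blast
  show ?thesis
  proof (rule that)
    show "character_graph M" "R0 \<subseteq> M" using M unfolding P_def by simp_all
    fix R assume R: "character_graph R" "M \<subseteq> R"
    then have "R \<in> P" using \<open>R0 \<subseteq> M\<close> unfolding P_def by auto
    then show "R = M" using R(2) by (rule maximal)
  qed
qed

lemma character_extension:
  assumes r0: "character_on A r0"
  obtains r where "character_on (carrier G) r" "\<forall>x\<in>A. r x = r0 x"
proof -
  obtain M where M: "character_graph M" "{(x, r0 x) | x. x \<in> A} \<subseteq> M"
    and maximal: "\<And>R. character_graph R \<Longrightarrow> M \<subseteq> R \<Longrightarrow> R = M"
    using maximal_character_graph[OF character_graph_of[OF r0]] by blast
  define r where "r x = (THE a. (x, a) \<in> M)" for x
  have sv: "single_valued M" and r: "character_on (Domain M) r"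
    using M(1) unfolding character_graph_def r_def by simp_all
  have r_eq: "(x, a) \<in> M \<Longrightarrow> r x = a" for x a
    unfolding r_def by (rule single_valued_The_eq[OF sv])
  have "Domain M = carrier G"
  proof (rule ccontr)
    assume "Domain M \<noteq> carrier G"
    then obtain e where e: "e \<in> carrier G" "e \<notin> Domain M"
      using subgroup.subset[OF character_onD(1)[OF r]] by blast
    obtain S' r' where S': "character_on S' r'" "Domain M \<subseteq> S'" "e \<in> S'"
      and agree: "\<forall>x\<in>Domain M. r' x = r x"
      using character_on_extend_to_element[OF r e(1)] by blast
    define R where "R = {(x, r' x) | x. x \<in> S'}"
    have "M \<subseteq> R"
    proof
      fix p assume "p \<in> M"
      moreover obtain x a where "p = (x, a)" by fastforce
      ultimately have "(x, a) \<in> M" "x \<in> Domain M" by auto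
      then have "x \<in> S'" "a = r' x" using S'(2) agree r_eq by auto
      then show "p \<in> R" using \<open>p = (x, a)\<close> unfolding R_def by blast
    qed
    moreover have "character_graph R" using character_graph_of[OF S'(1)] unfolding R_def .
    ultimately have "R = M" by (rule maximal[rotated])
    moreover have "(e, r' e) \<in> R" using S'(3) unfolding R_def by blast
    ultimately show False using e(2) by blast
  qed
  moreover have "\<forall>x\<in>A. r x = r0 x"
  proof
    fix x assume "x \<in> A"
    then have "(x, r0 x) \<in> M" using M(2) by blast
    then show "r x = r0 x" by (rule r_eq)
  qed
  ultimately show ?thesis using that r by simp
qed

end

section \<open>Symmetric cocycles are coboundaries\<close>

text \<open>The central extension of \<open>G\<close> by the nonzero complex numbers with cocycle \<open>c\<close>. A character
  of it that is the identity on the scalars \<open>(a, 0)\<close> splits the extension, which makes \<open>c\<close> a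
  coboundary.\<close>

definition twisted_product :: "('g::ab_group_add \<Rightarrow> 'g \<Rightarrow> complex) \<Rightarrow> (complex \<times> 'g) monoid" where
  "twisted_product c =
     \<lparr>carrier = {p. fst p \<noteq> 0},
      mult = (\<lambda>p q. (fst p * fst q * c (snd p) (snd q), snd p + snd q)),
      one = (1, 0)\<rparr>"

locale symmetric_cocycle =
  fixes c :: "'g::ab_group_add \<Rightarrow> 'g \<Rightarrow> complex"
  assumes nonzero: "c g h \<noteq> 0"
    and normalized: "c 0 h = 1"
    and commute: "c g h = c h g"
    and cocycle: "c g h * c (g + h) k = c h k * c g (h + k)"
begin

lemma comm_group_twisted_product: "comm_group (twisted_product c)"
proof (rule comm_groupI)
  fix x y assume "x \<in> carrier (twisted_product c)" "y \<in> carrier (twisted_product c)"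
  then show "x \<otimes>\<^bsub>twisted_product c\<^esub> y \<in> carrier (twisted_product c)"
    using nonzero by (simp add: twisted_product_def)
next
  fix x y z :: "complex \<times> 'g"
  show "x \<otimes>\<^bsub>twisted_product c\<^esub> y \<otimes>\<^bsub>twisted_product c\<^esub> z
      = x \<otimes>\<^bsub>twisted_product c\<^esub> (y \<otimes>\<^bsub>twisted_product c\<^esub> z)"
    using cocycle[of "snd x" "snd y" "snd z"] by (simp add: twisted_product_def add.assoc mult_ac)
next
  fix x y :: "complex \<times> 'g"
  show "x \<otimes>\<^bsub>twisted_product c\<^esub> y = y \<otimes>\<^bsub>twisted_product c\<^esub> x"
    by (simp add: twisted_product_def commute add.commute mult.commute)
next
  fix x :: "complex \<times> 'g"
  show "\<one>\<^bsub>twisted_product c\<^esub> \<otimes>\<^bsub>twisted_product c\<^esub> x = x"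
    by (simp add: twisted_product_def normalized)
next
  fix x assume x: "x \<in> carrier (twisted_product c)"
  define y where "y = (inverse (fst x * c (snd x) (- snd x)), - snd x)"
  have "y \<in> carrier (twisted_product c)" "y \<otimes>\<^bsub>twisted_product c\<^esub> x = \<one>\<^bsub>twisted_product c\<^esub>"
    using x nonzero commute[of "snd x" "- snd x"] by (auto simp: twisted_product_def y_def field_simps)
  then show "\<exists>y\<in>carrier (twisted_product c). y \<otimes>\<^bsub>twisted_product c\<^esub> x = \<one>\<^bsub>twisted_product c\<^esub>"
    by blast
qed (simp_all add: twisted_product_def)

interpretation twisted: comm_group "twisted_product c"
  by (rule comm_group_twisted_product)

lemma character_on_scalars: "twisted.character_on {(a, 0) | a :: complex. a \<noteq> 0} fst"
  unfolding twisted.character_on_def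
proof (intro conjI ballI)
  show "subgroup {(a, 0) | a :: complex. a \<noteq> 0} (twisted_product c)"
  proof
    fix x :: "complex \<times> 'g" assume x: "x \<in> {(a, 0) | a :: complex. a \<noteq> 0}"
    have "(inverse (fst x), 0) \<otimes>\<^bsub>twisted_product c\<^esub> x = \<one>\<^bsub>twisted_product c\<^esub>"
      using x normalized by (auto simp: twisted_product_def)
    then have "inv\<^bsub>twisted_product c\<^esub> x = (inverse (fst x), 0)"
      using x by (intro twisted.inv_equality) (auto simp: twisted_product_def)
    then show "inv\<^bsub>twisted_product c\<^esub> x \<in> {(a, 0) | a :: complex. a \<noteq> 0}" using x by auto
  qed (auto simp: twisted_product_def normalized)
qed (auto simp: twisted_product_def normalized)

lemma coboundary:
  obtains f :: "'g \<Rightarrow> complex" where "\<And>g. f g \<noteq> 0" "\<And>g h. f (g + h) = c g h * f g * f h"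
proof -
  obtain r where r: "twisted.character_on (carrier (twisted_product c)) r"
    and r_scalar: "\<forall>x\<in>{(a, 0) | a :: complex. a \<noteq> 0}. r x = fst x"
    using twisted.character_extension[OF character_on_scalars] by blast
  define F where "F g = r (1, g)" for g
  have carrier: "(a, g) \<in> carrier (twisted_product c) \<longleftrightarrow> a \<noteq> 0" for a g
    by (simp add: twisted_product_def)
  have F_nonzero: "F g \<noteq> 0" for g
    using twisted.character_onD(2)[OF r] carrier unfolding F_def by simp
  have "F g * F h = c g h * F (g + h)" for g h
  proof -
    have "(1, g) \<otimes>\<^bsub>twisted_product c\<^esub> (1, h) = (c g h, 0) \<otimes>\<^bsub>twisted_product c\<^esub> (1, g + h)"
      by (simp add: twisted_product_def normalized)
    moreover have "r ((1, g) \<otimes>\<^bsub>twisted_product c\<^esub> (1, h)) = F g * F h"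
      using twisted.character_onD(3)[OF r] carrier unfolding F_def by simp
    moreover have "r ((c g h, 0) \<otimes>\<^bsub>twisted_product c\<^esub> (1, g + h)) = c g h * F (g + h)"
      using twisted.character_onD(3)[OF r] carrier nonzero r_scalar unfolding F_def by simp
    ultimately show ?thesis by simp
  qed
  then have "inverse (F (g + h)) = c g h * inverse (F g) * inverse (F h)" for g h
    using nonzero[of g h] F_nonzero by (simp add: field_simps)
  then show ?thesis using that[of "\<lambda>g. inverse (F g)"] F_nonzero by simp
qed

end

section \<open>Vertex operator algebras\<close>

lemma Sum_any_eq_single: "(\<And>i. i \<noteq> k \<Longrightarrow> f i = 0) \<Longrightarrow> Sum_any f = f k"
proof -
  assume "\<And>i. i \<noteq> k \<Longrightarrow> f i = 0"
  then have "Sum_any f = Sum_any (\<lambda>i. if i = k then f i else 0)" by (intro Sum_any.cong) auto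
  then show ?thesis by simp
qed

lemma finite_nat_support: "(\<And>i. i \<ge> K \<Longrightarrow> f i = 0) \<Longrightarrow> finite {i::nat. f i \<noteq> 0}"
  by (rule finite_subset[of _ "{..<K}"]) (auto simp: not_le[symmetric])

lemma int_max_nonzero:
  fixes f :: "int \<Rightarrow> 'a::zero"
  assumes "f j0 \<noteq> 0" and "\<And>n. n \<ge> N \<Longrightarrow> f n = 0"
  obtains j where "f j \<noteq> 0" "\<And>j'. j' > j \<Longrightarrow> f j' = 0"
proof -
  define d where "d = (LEAST d::nat. f (N - int d) \<noteq> 0)"
  have "j0 < N" using assms by (meson not_less)
  then have "f (N - int (nat (N - j0))) \<noteq> 0" using assms(1) by simp
  then have fd: "f (N - int d) \<noteq> 0" unfolding d_def by (rule LeastI)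
  have "f j' = 0" if "j' > N - int d" for j'
  proof (cases "j' \<ge> N")
    case False
    then have "nat (N - j') < d" using that by simp
    then have "\<not> f (N - int (nat (N - j'))) \<noteq> 0" unfolding d_def by (rule not_less_Least)
    then show ?thesis using False by simp
  qed (use assms(2) in blast)
  then show ?thesis using that fd by blast
qed

locale complex_vector_space = vector_space scale
  for scale :: "complex \<Rightarrow> 'v::ab_group_add \<Rightarrow> 'v" (infixr \<open>*s\<close> 75)
begin

lemma clin_module_hom:
  assumes "clin scale f"
  shows "module_hom scale scale f"
proof -
  have lin: "f (a *s x + b *s y) = a *s f x + b *s f y" for a b x y
    using assms by (simp add: clin_def)
  show ?thesis
    unfolding module_hom_iff using module_axioms lin[of 1 _ 1] lin[of _ _ 0 0] by simp
qed

lemma clin_Sum_any: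
  assumes "clin scale f" "finite {i. g i \<noteq> 0}"
  shows "f (Sum_any g) = Sum_any (\<lambda>i. f (g i))"
proof -
  interpret module_hom scale scale f by (rule clin_module_hom[OF assms(1)])
  have "Sum_any g = sum g {i. g i \<noteq> 0}" by (rule Sum_any.expand_superset) (use assms in auto)
  moreover have "Sum_any (\<lambda>i. f (g i)) = sum (\<lambda>i. f (g i)) {i. g i \<noteq> 0}"
    by (rule Sum_any.expand_superset) (use assms in auto)
  ultimately show ?thesis by (simp add: sum)
qed

lemma Sum_any_scale: "Sum_any (\<lambda>i. c *s f i) = c *s Sum_any f"
proof (cases "c = 0 \<or> finite {i. f i \<noteq> 0}")
  case True
  have "clin scale (\<lambda>x. c *s x)" by (simp add: clin_def scale_right_distrib mult.commute)
  then show ?thesis using True clin_Sum_any[of "\<lambda>x. c *s x" f] by auto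
next
  case False
  then have "{i. c *s f i \<noteq> 0} = {i. f i \<noteq> 0}" by auto
  then show ?thesis using False by (simp add: Sum_any.infinite)
qed

lemma vanishing_by_descent:
  fixes T :: "int \<Rightarrow> int \<Rightarrow> 'v"
  assumes top: "\<And>p q. q \<ge> M \<Longrightarrow> T p q = 0"
    and recursion: "\<And>p q. \<exists>a. a 0 = 1 \<and> Sum_any (\<lambda>i::nat. a i *s T (p - int i) (q + int i)) = 0"
  shows "T p q = 0"
proof (induction "nat (M - q)" arbitrary: p q rule: less_induct)
  case less
  show ?case
  proof (cases "q \<ge> M")
    case False
    obtain a where a: "a 0 = 1" "Sum_any (\<lambda>i::nat. a i *s T (p - int i) (q + int i)) = 0"
      using recursion by blast
    have "T (p - int i) (q + int i) = 0" if "i \<noteq> 0" for i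
      using False that by (intro less) auto
    then have "Sum_any (\<lambda>i::nat. a i *s T (p - int i) (q + int i)) = T p q"
      using a(1) by (subst Sum_any_eq_single[of 0]) auto
    then show ?thesis using a(2) by simp
  qed (rule top)
qed

end

locale voa = complex_vector_space scale
  for scale :: "complex \<Rightarrow> 'v::ab_group_add \<Rightarrow> 'v" (infixr \<open>*s\<close> 75) +
  fixes Y :: "'v \<Rightarrow> int \<Rightarrow> 'v \<Rightarrow> 'v" and one \<omega> :: 'v
  assumes VOA: "VOA scale Y one \<omega>"
begin

lemma clin_Y: "clin scale (Y u n)"
  and clin_Y_left: "clin scale (\<lambda>u. Y u n v)"
  using VOA by (simp_all add: VOA_def)

sublocale Y_right: module_hom scale scale "Y u n" for u n
  by (rule clin_module_hom[OF clin_Y])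

sublocale Y_left: module_hom scale scale "\<lambda>u. Y u n v" for n v
  by (rule clin_module_hom[OF clin_Y_left])

lemma Y_truncation: "\<exists>N. \<forall>n\<ge>N. Y u n v = 0"
  using VOA by (simp add: VOA_def)

lemma Y_vacuum: "Y one n v = (if n = -1 then v else 0)"
  using VOA by (simp add: VOA_def)

lemma Y_creation: "Y v (-1) one = v"
  using VOA by (simp add: VOA_def)

lemma Y_L_minus_one: "Y (Y \<omega> 0 u) n v = (- of_int n) *s Y u (n - 1) v"
  using VOA unfolding VOA_def by (metis add.commute add.right_inverse)

lemma borcherds:
  "Sum_any (\<lambda>i::nat. (of_int m gchoose i :: complex) *s Y (Y u (l + int i) v) (m + n - int i) w)
   = Sum_any (\<lambda>i::nat. ((-1) ^ i * (of_int l gchoose i) :: complex) *s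
       (Y u (m + l - int i) (Y v (n + int i) w)
        - ((-1::complex) powi l) *s Y v (n + l - int i) (Y u (m + int i) w)))"
  using VOA unfolding VOA_def borcherds_on_def by blast

lemma commutator_formula:
  "Sum_any (\<lambda>i::nat. (of_int m gchoose i :: complex) *s Y (Y u (int i) v) (m + n - int i) w)
   = Y u m (Y v n w) - Y v n (Y u m w)"
  using borcherds[of m u 0 v n w] by (simp add: Sum_any_eq_single[of 0] gbinomial_0_left)

lemma L_minus_one_commutator: "Y \<omega> 0 (Y u n w) - Y u n (Y \<omega> 0 w) = (- of_int n) *s Y u (n - 1) w"
  using commutator_formula[of 0 \<omega> u n w] Y_L_minus_one
  by (simp add: Sum_any_eq_single[of 0] gbinomial_0_left)

lemma borcherds_lhs_finite:
  "finite {i::nat. (of_int m gchoose i :: complex) *s Y (Y u (l + int i) v) (m + n - int i) w \<noteq> 0}"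
proof -
  obtain N where "\<forall>j\<ge>N. Y u j v = 0" using Y_truncation by blast
  then show ?thesis by (intro finite_nat_support[of "nat (N - l)"]) auto
qed

lemma borcherds_rhs_finite:
  "finite {i::nat. ((-1) ^ i * (of_int l gchoose i) :: complex) *s
      (Y u (m + l - int i) (Y v (n + int i) w)
       - ((-1::complex) powi l) *s Y v (n + l - int i) (Y u (m + int i) w)) \<noteq> 0}"
proof -
  obtain N1 where "\<forall>j\<ge>N1. Y v j w = 0" using Y_truncation by blast
  moreover obtain N2 where "\<forall>j\<ge>N2. Y u j w = 0" using Y_truncation by blast
  ultimately show ?thesis by (intro finite_nat_support[of "max (nat (N1 - n)) (nat (N2 - m))"]) auto
qed

lemma annihilator_closed_left:
  assumes x: "\<forall>j. Y u j x = 0"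
  shows "Y u p (Y w q x) = 0"
proof -
  obtain N where N: "\<forall>j\<ge>N. Y u j w = 0" using Y_truncation by blast
  obtain M where M: "\<forall>j\<ge>M. Y w j x = 0" using Y_truncation by blast
  show ?thesis
  proof (rule vanishing_by_descent[where T = "\<lambda>p q. Y u p (Y w q x)" and M = M])
    fix p q
    show "\<exists>a. a 0 = 1 \<and> Sum_any (\<lambda>i::nat. a i *s Y u (p - int i) (Y w (q + int i) x)) = 0"
      using borcherds[of "p - N" u N w q x] N x
      by (intro exI[of _ "\<lambda>i. (-1) ^ i * (of_int N gchoose i)"]) simp
  qed (use M in simp)
qed

lemma annihilator_closed_right:
  assumes x: "\<forall>j. Y u j x = 0"
  shows "Y u p (Y x q w) = 0"
proof -
  obtain N where N: "\<forall>j\<ge>N. Y u j w = 0" using Y_truncation by blast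
  obtain M where M: "\<forall>j\<ge>M. Y x j w = 0" using Y_truncation by blast
  show ?thesis
  proof (rule vanishing_by_descent[where T = "\<lambda>p q. Y u p (Y x q w)" and M = M])
    fix p q
    show "\<exists>a. a 0 = 1 \<and> Sum_any (\<lambda>i::nat. a i *s Y u (p - int i) (Y x (q + int i) w)) = 0"
      using borcherds[of N u "p - N" x q w] N x
      by (intro exI[of _ "\<lambda>i. (-1) ^ i * (of_int (p - N) gchoose i)"]) simp
  qed (use M in simp)
qed

lemma VOA_ideal_annihilator: "VOA_ideal scale Y {x. \<forall>j. Y u j x = 0}"
  unfolding VOA_ideal_def csubspace_def
  using annihilator_closed_left annihilator_closed_right clin_Y by (auto simp: clin_def)

lemma simple_modes_nonzero:
  assumes simple: "simple_VOA scale Y one \<omega>" and "u \<noteq> 0" "v \<noteq> 0"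
  obtains n where "Y u n v \<noteq> 0"
proof (rule ccontr)
  assume "\<not> thesis"
  then have "v \<in> {x. \<forall>j. Y u j x = 0}" using that by blast
  then have "{x. \<forall>j. Y u j x = 0} = UNIV"
    using simple VOA_ideal_annihilator \<open>v \<noteq> 0\<close> unfolding simple_VOA_def by blast
  then have "Y u (-1) one = 0" by blast
  then show False using Y_creation \<open>u \<noteq> 0\<close> by simp
qed

end

section \<open>Group gradings and intertwining operators\<close>

locale graded_voa = voa scale Y one \<omega>
  for scale :: "complex \<Rightarrow> 'v::ab_group_add \<Rightarrow> 'v" (infixr \<open>*s\<close> 75) and Y one \<omega> +
  fixes Vg :: "'g::ab_group_add \<Rightarrow> 'v set"
  assumes graded: "G_graded scale Y one \<omega> Vg"
begin

lemma Vg_lincomb: "x \<in> Vg g \<Longrightarrow> y \<in> Vg g \<Longrightarrow> a *s x + b *s y \<in> Vg g"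
  and Vg_zero: "0 \<in> Vg g"
  using graded by (simp_all add: G_graded_def csubspace_def)

lemma Vg_scale: "x \<in> Vg g \<Longrightarrow> a *s x \<in> Vg g"
  using Vg_lincomb[of x g 0 a 0] Vg_zero by simp

lemma Y_graded: "u \<in> Vg g \<Longrightarrow> v \<in> Vg h \<Longrightarrow> Y u n v \<in> Vg (g + h)"
  using graded by (simp add: G_graded_def)

lemma Y_Vg0: "u \<in> Vg 0 \<Longrightarrow> v \<in> Vg h \<Longrightarrow> Y u n v \<in> Vg h"
  using Y_graded[of u 0 v h n] by simp

lemma one_in_Vg0: "one \<in> Vg 0"
  and omega_in_Vg0: "\<omega> \<in> Vg 0"
  using graded by (simp_all add: G_graded_def)

definition component :: "'v \<Rightarrow> 'g \<Rightarrow> 'v" where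
  "component v = (THE f. finite {g. f g \<noteq> 0} \<and> (\<forall>g. f g \<in> Vg g) \<and> v = Sum_any f)"

lemma decomposition_unique: "\<exists>!f. finite {g. f g \<noteq> 0} \<and> (\<forall>g. f g \<in> Vg g) \<and> v = Sum_any f"
  using graded by (simp add: G_graded_def)

lemma component_finite: "finite {g. component v g \<noteq> 0}"
  and component_in_Vg: "component v g \<in> Vg g"
  and Sum_any_component: "Sum_any (component v) = v"
  using theI'[OF decomposition_unique[of v]] unfolding component_def[symmetric] by auto

lemma component_eqI:
  "finite {g. f g \<noteq> 0} \<Longrightarrow> (\<And>g. f g \<in> Vg g) \<Longrightarrow> Sum_any f = v \<Longrightarrow> component v = f"
  using decomposition_unique[of v] component_finite component_in_Vg Sum_any_component by metis

lemma component_homogeneous: "v \<in> Vg k \<Longrightarrow> component v = (\<lambda>g. if g = k then v else 0)"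
  by (rule component_eqI) (auto simp: Vg_zero)

lemma homogeneous_if_components_vanish: "(\<And>g. g \<noteq> k \<Longrightarrow> component v g = 0) \<Longrightarrow> v \<in> Vg k"
  using Sum_any_eq_single[of k "component v"] Sum_any_component[of v] component_in_Vg[of v k] by simp

lemma component_lincomb:
  "component (a *s x + b *s y) = (\<lambda>g. a *s component x g + b *s component y g)"
proof (rule component_eqI)
  show "finite {g. a *s component x g + b *s component y g \<noteq> 0}"
    by (rule finite_subset[of _ "{g. component x g \<noteq> 0} \<union> {g. component y g \<noteq> 0}"])
      (auto simp: component_finite)
  have "Sum_any (\<lambda>g. a *s component x g + b *s component y g)
      = Sum_any (\<lambda>g. a *s component x g) + Sum_any (\<lambda>g. b *s component y g)"
    by (intro Sum_any.distrib finite_subset[OF _ component_finite]) auto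
  then show "Sum_any (\<lambda>g. a *s component x g + b *s component y g) = a *s x + b *s y"
    by (simp add: Sum_any_scale Sum_any_component)
qed (simp add: Vg_lincomb component_in_Vg)

lemma clin_component: "clin scale (\<lambda>v. component v k)"
  unfolding clin_def by (simp add: component_lincomb)

sublocale component: module_hom scale scale "\<lambda>v. component v k" for k
  by (rule clin_module_hom[OF clin_component])

lemma component_commute:
  assumes T: "clin scale T" and T_Vg: "\<And>g x. x \<in> Vg g \<Longrightarrow> T x \<in> Vg g"
  shows "component (T v) g = T (component v g)"
proof -
  interpret T: module_hom scale scale T by (rule clin_module_hom[OF T])
  have "component (T v) = (\<lambda>g. T (component v g))"
  proof (rule component_eqI)
    show "finite {g. T (component v g) \<noteq> 0}"
      by (rule finite_subset[OF _ component_finite[of v]]) auto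
    show "T (component v g) \<in> Vg g" for g by (simp add: T_Vg component_in_Vg)
    show "Sum_any (\<lambda>g. T (component v g)) = T v"
      using clin_Sum_any[OF T component_finite[of v]] Sum_any_component[of v] by simp
  qed
  then show ?thesis by simp
qed

lemma component_Y_Vg0: "u \<in> Vg 0 \<Longrightarrow> component (Y u n v) k = Y u n (component v k)"
  by (rule component_commute[OF clin_Y]) (rule Y_Vg0)

definition rescale :: "('g \<Rightarrow> complex) \<Rightarrow> 'v \<Rightarrow> 'v" where
  "rescale f v = Sum_any (\<lambda>g. f g *s component v g)"

lemma rescale_eq_sum: "rescale f v = (\<Sum>g | component v g \<noteq> 0. f g *s component v g)"
  unfolding rescale_def by (rule Sum_any.expand_superset) (auto simp: component_finite)

lemma component_rescale: "component (rescale f v) = (\<lambda>g. f g *s component v g)"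
  unfolding rescale_def
  by (rule component_eqI) (auto intro: finite_subset[OF _ component_finite[of v]] simp: Vg_scale component_in_Vg)

lemma rescale_homogeneous: "v \<in> Vg k \<Longrightarrow> rescale f v = f k *s v"
  unfolding rescale_def component_homogeneous by (subst Sum_any_eq_single[of k]) auto

lemma rescale_rescale: "rescale f (rescale f' v) = rescale (\<lambda>g. f g * f' g) v"
  unfolding rescale_def[of f] component_rescale by (simp add: rescale_def)

lemma rescale_one: "rescale (\<lambda>_. 1) v = v"
  by (simp add: rescale_def Sum_any_component)

lemma clin_rescale: "clin scale (rescale f)"
  unfolding clin_def
proof (intro allI)
  fix a b x y
  have "rescale f (a *s x + b *s y) = Sum_any (\<lambda>g. a *s (f g *s component x g) + b *s (f g *s component y g))"
    unfolding rescale_def component_lincomb by (simp add: scale_right_distrib mult.commute)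
  also have "\<dots> = Sum_any (\<lambda>g. a *s (f g *s component x g)) + Sum_any (\<lambda>g. b *s (f g *s component y g))"
    by (intro Sum_any.distrib finite_subset[OF _ component_finite]) auto
  finally show "rescale f (a *s x + b *s y) = a *s rescale f x + b *s rescale f y"
    by (simp only: rescale_def Sum_any_scale)
qed

sublocale rescale: module_hom scale scale "rescale f" for f
  by (rule clin_module_hom[OF clin_rescale])

lemma bilinear_rescale_expand:
  assumes "\<And>u. clin scale (Z u)" "\<And>v. clin scale (\<lambda>u. Z u v)"
  shows "Z (rescale a u) (rescale b v) = (\<Sum>g | component u g \<noteq> 0. \<Sum>h | component v h \<noteq> 0.
    (a g * b h) *s Z (component u g) (component v h))"
proof -
  interpret Z_right: module_hom scale scale "Z u'" for u' by (rule clin_module_hom[OF assms(1)])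
  interpret Z_left: module_hom scale scale "\<lambda>u. Z u v'" for v' by (rule clin_module_hom[OF assms(2)])
  show ?thesis
    unfolding rescale_eq_sum Z_left.sum Z_right.sum Z_left.scale Z_right.scale
    by (subst sum.swap) (simp add: scale_sum_right mult.commute)
qed

text \<open>Only integral
  exponents occur; elsewhere the operator is \<open>0\<close>, as the encoding of intertwining operators
  requires.\<close>

definition graded_intertwiner :: "('v \<Rightarrow> int \<Rightarrow> 'v \<Rightarrow> 'v) \<Rightarrow> 'g \<Rightarrow> 'g \<Rightarrow> 'g \<Rightarrow> 'v \<Rightarrow> complex \<Rightarrow> 'v \<Rightarrow> 'v"
  where "graded_intertwiner Y' g h k w a x =
    (if w \<in> Vg g \<and> x \<in> Vg h \<and> a \<in> \<int> then component (Y' w \<lfloor>Re a\<rfloor> x) k else 0)"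

lemma graded_intertwiner_of_int:
  "w \<in> Vg g \<Longrightarrow> x \<in> Vg h \<Longrightarrow> graded_intertwiner Y' g h k w (of_int n) x = component (Y' w n x) k"
  by (simp add: graded_intertwiner_def)

lemma graded_intertwiner_not_Ints: "a \<notin> \<int> \<Longrightarrow> graded_intertwiner Y' g h k w a x = 0"
  by (simp add: graded_intertwiner_def)

context
  fixes Y' :: "'v \<Rightarrow> int \<Rightarrow> 'v \<Rightarrow> 'v"
  assumes VOA': "VOA scale Y' one \<omega>" and agree: "\<forall>u\<in>Vg 0. Y' u = Y u"
begin

interpretation Y': voa scale Y' one \<omega> by unfold_locales (rule VOA')

lemma graded_intertwiner_truncation:
  "\<exists>N::nat. \<forall>n\<ge>N. graded_intertwiner Y' g h k w (a + of_nat n) x = 0"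
proof (cases "a \<in> \<int>")
  case True
  then obtain j where j: "a = of_int j" by (auto elim: Ints_cases)
  obtain N where N: "\<forall>n\<ge>N. Y' w n x = 0" using Y'.Y_truncation by blast
  have "a + of_nat n = of_int (j + int n)" for n using j by simp
  then have "graded_intertwiner Y' g h k w (a + of_nat n) x = 0" if "n \<ge> nat (N - j)" for n
    using N that by (simp add: graded_intertwiner_def)
  then show ?thesis by blast
qed (simp add: graded_intertwiner_not_Ints)

lemma graded_intertwiner_L_minus_one:
  assumes w: "w \<in> Vg g" and x: "x \<in> Vg h"
  shows "Y \<omega> 0 (graded_intertwiner Y' g h k w b x) - graded_intertwiner Y' g h k w b (Y \<omega> 0 x)
    = (- b) *s graded_intertwiner Y' g h k w (b - 1) x"
proof (cases "b \<in> \<int>")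
  case True
  then obtain n where n: "b = of_int n" by (auto elim: Ints_cases)
  have Y'_omega: "Y' \<omega> = Y \<omega>" using agree omega_in_Vg0 by blast
  have "Y \<omega> 0 (component (Y' w n x) k) - component (Y' w n (Y \<omega> 0 x)) k
      = component (Y' \<omega> 0 (Y' w n x) - Y' w n (Y' \<omega> 0 x)) k"
    using component_Y_Vg0[OF omega_in_Vg0] Y'_omega by (simp add: component.diff)
  also have "\<dots> = (- b) *s component (Y' w (n - 1) x) k"
    using n by (simp add: Y'.L_minus_one_commutator component.scale component.neg)
  finally have "Y \<omega> 0 (component (Y' w n x) k) - component (Y' w n (Y \<omega> 0 x)) k
      = (- b) *s component (Y' w (n - 1) x) k" .
  moreover have "b - 1 = of_int (n - 1)" using n by simp
  ultimately show ?thesis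
    using graded_intertwiner_of_int[OF w x] graded_intertwiner_of_int[OF w Y_Vg0[OF omega_in_Vg0 x]] n
    by metis
qed (simp add: graded_intertwiner_not_Ints)

lemma graded_intertwiner_jacobi:
  assumes v: "v \<in> Vg 0" and w: "w \<in> Vg g" and x: "x \<in> Vg h"
  shows "Sum_any (\<lambda>i::nat. (of_int m gchoose i :: complex) *s
           graded_intertwiner Y' g h k (Y v (l + int i) w) (of_int m + a - of_nat i) x)
    = Sum_any (\<lambda>i::nat. ((-1) ^ i * (of_int l gchoose i) :: complex) *s
        (Y v (m + l - int i) (graded_intertwiner Y' g h k w (a + of_nat i) x)
         - ((-1::complex) powi l) *s graded_intertwiner Y' g h k w (a + of_int l - of_nat i) (Y v (m + int i) x)))"
proof (cases "a \<in> \<int>")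
  case True
  then obtain n where n: "a = of_int n" by (auto elim: Ints_cases)
  have Y'_v: "Y' v = Y v" using agree v by blast
  have idx: "of_int m + a - of_nat i = of_int (m + n - int i)" "a + of_nat i = of_int (n + int i)"
    "a + of_int l - of_nat i = of_int (n + l - int i)" for i using n by simp_all
  have "Sum_any (\<lambda>i::nat. (of_int m gchoose i :: complex) *s
           graded_intertwiner Y' g h k (Y v (l + int i) w) (of_int m + a - of_nat i) x)
      = Sum_any (\<lambda>i::nat. component ((of_int m gchoose i :: complex) *s
           Y' (Y' v (l + int i) w) (m + n - int i) x) k)"
    by (simp only: idx graded_intertwiner_of_int[OF Y_Vg0[OF v w] x] Y'_v component.scale)
  also have "\<dots> = component (Sum_any (\<lambda>i::nat. ((-1) ^ i * (of_int l gchoose i) :: complex) *s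
        (Y' v (m + l - int i) (Y' w (n + int i) x)
         - ((-1::complex) powi l) *s Y' w (n + l - int i) (Y' v (m + int i) x)))) k"
    by (simp only: clin_Sum_any[OF clin_component Y'.borcherds_lhs_finite, symmetric] Y'.borcherds)
  also have "\<dots> = Sum_any (\<lambda>i::nat. ((-1) ^ i * (of_int l gchoose i) :: complex) *s
        (Y v (m + l - int i) (graded_intertwiner Y' g h k w (a + of_nat i) x)
         - ((-1::complex) powi l) *s graded_intertwiner Y' g h k w (a + of_int l - of_nat i) (Y v (m + int i) x)))"
    by (subst clin_Sum_any[OF clin_component Y'.borcherds_rhs_finite])
      (simp only: idx
        graded_intertwiner_of_int[OF w x] graded_intertwiner_of_int[OF w Y_Vg0[OF v x]] Y'_v
        component.scale component.diff component_Y_Vg0[OF v])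
  finally show ?thesis .
qed (simp add: graded_intertwiner_not_Ints)

lemma intertwining_graded_intertwiner:
  "intertwining scale Y \<omega> (Vg 0) (Vg g) (Vg h) (Vg k) (graded_intertwiner Y' g h k)"
  unfolding intertwining_def
proof (intro conjI allI impI ballI)
  show "graded_intertwiner Y' g h k w a x \<in> Vg k" for w a x
    by (simp add: graded_intertwiner_def component_in_Vg Vg_zero)
  show "clin_on scale (Vg g) (\<lambda>w. graded_intertwiner Y' g h k w a x)" if "x \<in> Vg h" for a x
    using that by (auto simp: clin_on_def graded_intertwiner_def Vg_lincomb component_lincomb
        clin_def[THEN iffD1, OF Y'.clin_Y_left])
  show "clin_on scale (Vg h) (graded_intertwiner Y' g h k w a)" if "w \<in> Vg g" for a w
    using that by (auto simp: clin_on_def graded_intertwiner_def Vg_lincomb component_lincomb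
        clin_def[THEN iffD1, OF Y'.clin_Y])
  show "graded_intertwiner Y' g h k w a x = 0" if "w \<notin> Vg g \<or> x \<notin> Vg h" for w a x
    using that by (auto simp: graded_intertwiner_def)
qed (simp_all add: graded_intertwiner_truncation graded_intertwiner_L_minus_one graded_intertwiner_jacobi)

end

end

section \<open>Two vertex operator algebra structures agreeing on \<open>V\<^sup>0\<close>\<close>

lemma fusion_rule_0_trivial:
  assumes "fusion_rule sc Y \<omega> U W1 W2 W3 0" and "intertwining sc Y \<omega> U W1 W2 W3 I"
  shows "I = (\<lambda>_ _ _. 0)"
  using assms unfolding fusion_rule_def has_dim_C_def by auto

lemma fusion_rule_1_proportional:
  assumes "fusion_rule sc Y \<omega> U W1 W2 W3 1"
  obtains B where "\<And>I. intertwining sc Y \<omega> U W1 W2 W3 I \<Longrightarrow> \<exists>c. I = (\<lambda>w a x. sc c (B w a x))"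
proof -
  obtain Bs where Bs: "{I. intertwining sc Y \<omega> U W1 W2 W3 I}
      = {(\<lambda>w a x. \<Sum>i<1. sc (c i) ((Bs ! i) w a x)) | c. True}"
    using assms unfolding fusion_rule_def has_dim_C_def by blast
  show ?thesis
  proof (rule that)
    fix I assume "intertwining sc Y \<omega> U W1 W2 W3 I"
    then obtain c where "I = (\<lambda>w a x. \<Sum>i<1. sc (c i) ((Bs ! i) w a x))" using Bs by blast
    then show "\<exists>c. I = (\<lambda>w a x. sc c ((Bs ! 0) w a x))" by auto
  qed
qed

locale simple_current_pair = graded_voa scale Y one \<omega> Vg
  for scale :: "complex \<Rightarrow> 'v::ab_group_add \<Rightarrow> 'v" (infixr \<open>*s\<close> 75) and Y one \<omega>
    and Vg :: "'g::ab_group_add \<Rightarrow> 'v set" +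
  fixes Ybar :: "'v \<Rightarrow> int \<Rightarrow> 'v \<Rightarrow> 'v"
  assumes simple_Y: "simple_VOA scale Y one \<omega>"
    and simple_Ybar: "simple_VOA scale Ybar one \<omega>"
    and Vg_nonzero: "Vg g \<noteq> {0}"
    and fusion_rules: "fusion_rule scale Y \<omega> (Vg 0) (Vg g) (Vg h) (Vg k) (if g + h = k then 1 else 0)"
    and Ybar_Vg0: "\<forall>u\<in>Vg 0. Ybar u = Y u"
begin

sublocale Ybar: voa scale Ybar one \<omega>
  using simple_Ybar by unfold_locales (simp add: simple_VOA_def)

lemma Vg_nonzero_element:
  obtains u where "u \<in> Vg g" "u \<noteq> 0"
  using Vg_nonzero[of g] Vg_zero[of g] by blast

lemma Ybar_graded:
  assumes u: "u \<in> Vg g" and v: "v \<in> Vg h"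
  shows "Ybar u n v \<in> Vg (g + h)"
proof (rule homogeneous_if_components_vanish)
  fix k assume "k \<noteq> g + h"
  then have "graded_intertwiner Ybar g h k = (\<lambda>_ _ _. 0)"
    using fusion_rules[of g h k] intertwining_graded_intertwiner[OF Ybar.VOA Ybar_Vg0]
    by (intro fusion_rule_0_trivial) auto
  then show "component (Ybar u n v) k = 0"
    using graded_intertwiner_of_int[OF u v, of Ybar k n] by simp
qed

lemma Ybar_proportional:
  obtains c where "c \<noteq> 0" "\<And>u v n. u \<in> Vg g \<Longrightarrow> v \<in> Vg h \<Longrightarrow> Ybar u n v = c *s Y u n v"
proof -
  obtain B where B: "\<And>I. intertwining scale Y \<omega> (Vg 0) (Vg g) (Vg h) (Vg (g + h)) I
      \<Longrightarrow> \<exists>c. I = (\<lambda>w a x. c *s B w a x)"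
    using fusion_rule_1_proportional[of scale Y \<omega> "Vg 0" "Vg g" "Vg h" "Vg (g + h)"] fusion_rules[of g h "g + h"]
    by auto
  obtain cY where cY: "graded_intertwiner Y g h (g + h) = (\<lambda>w a x. cY *s B w a x)"
    using B intertwining_graded_intertwiner[OF VOA] by blast
  obtain cB where cB: "graded_intertwiner Ybar g h (g + h) = (\<lambda>w a x. cB *s B w a x)"
    using B intertwining_graded_intertwiner[OF Ybar.VOA Ybar_Vg0] by blast
  have Y_B: "Y u n v = cY *s B u (of_int n) v" if "u \<in> Vg g" "v \<in> Vg h" for u v n
    using graded_intertwiner_of_int[OF that, of Y "g + h" n] cY
      component_homogeneous[OF Y_graded[OF that]] by simp
  have Ybar_B: "Ybar u n v = cB *s B u (of_int n) v" if "u \<in> Vg g" "v \<in> Vg h" for u v n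
    using graded_intertwiner_of_int[OF that, of Ybar "g + h" n] cB
      component_homogeneous[OF Ybar_graded[OF that]] by simp
  obtain u0 v0 where u0: "u0 \<in> Vg g" "u0 \<noteq> 0" and v0: "v0 \<in> Vg h" "v0 \<noteq> 0"
    using Vg_nonzero_element by metis
  obtain n0 where "Y u0 n0 v0 \<noteq> 0" using simple_modes_nonzero[OF simple_Y u0(2) v0(2)] .
  then have "cY \<noteq> 0" using Y_B[OF u0(1) v0(1)] by auto
  obtain n1 where "Ybar u0 n1 v0 \<noteq> 0" using Ybar.simple_modes_nonzero[OF simple_Ybar u0(2) v0(2)] .
  then have "cB \<noteq> 0" using Ybar_B[OF u0(1) v0(1)] by auto
  have "Ybar u n v = (cB / cY) *s Y u n v" if "u \<in> Vg g" "v \<in> Vg h" for u v n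
    using Y_B[OF that] Ybar_B[OF that] \<open>cY \<noteq> 0\<close> by simp
  moreover have "cB / cY \<noteq> 0" using \<open>cB \<noteq> 0\<close> \<open>cY \<noteq> 0\<close> by simp
  ultimately show ?thesis using that by blast
qed

definition twist :: "'g \<Rightarrow> 'g \<Rightarrow> complex" where
  "twist g h = (SOME c. c \<noteq> 0 \<and> (\<forall>u\<in>Vg g. \<forall>v\<in>Vg h. \<forall>n. Ybar u n v = c *s Y u n v))"

lemma twist_nonzero: "twist g h \<noteq> 0"
  and Ybar_twist: "u \<in> Vg g \<Longrightarrow> v \<in> Vg h \<Longrightarrow> Ybar u n v = twist g h *s Y u n v"
proof -
  have "\<exists>c. c \<noteq> 0 \<and> (\<forall>u\<in>Vg g. \<forall>v\<in>Vg h. \<forall>n. Ybar u n v = c *s Y u n v)"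
    using Ybar_proportional[of g h] by metis
  from someI_ex[OF this] show "twist g h \<noteq> 0"
    and "u \<in> Vg g \<Longrightarrow> v \<in> Vg h \<Longrightarrow> Ybar u n v = twist g h *s Y u n v"
    unfolding twist_def[symmetric] by blast+
qed

lemma twist_0_left: "twist 0 h = 1"
proof -
  obtain v where v: "v \<in> Vg h" "v \<noteq> 0" using Vg_nonzero_element .
  have "Ybar one (-1) v = Y one (-1) v" using Ybar_Vg0 one_in_Vg0 by simp
  then have "twist 0 h *s v = 1 *s v" using Ybar_twist[OF one_in_Vg0 v(1)] Y_vacuum by simp
  then show ?thesis using v(2) by (metis scale_cancel_right)
qed

lemma twist_0_right: "twist g 0 = 1"
proof -
  obtain u where u: "u \<in> Vg g" "u \<noteq> 0" using Vg_nonzero_element .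
  have "twist g 0 *s u = 1 *s u"
    using Ybar_twist[OF u(1) one_in_Vg0, of "-1"] Y_creation Ybar.Y_creation by simp
  then show ?thesis using u(2) by (metis scale_cancel_right)
qed

text \<open>The commutator formula applied to the vacuum; by the creation property its last term
  is \<open>v\<^sub>n u\<close>.\<close>

lemma twist_commute: "twist g h = twist h g"
proof -
  obtain u where u: "u \<in> Vg g" "u \<noteq> 0" using Vg_nonzero_element .
  obtain v where v: "v \<in> Vg h" "v \<noteq> 0" using Vg_nonzero_element .
  obtain n where n: "Y v n u \<noteq> 0" using simple_modes_nonzero[OF simple_Y v(2) u(2)] .
  have Ybar_one: "Ybar x j one = Y x j one" if "x \<in> Vg k" for x j k
    using Ybar_twist[OF that one_in_Vg0] twist_0_right by simp
  have "Ybar (Ybar u (int i) v) j one = twist g h *s Y (Y u (int i) v) j one" for i j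
    using Ybar_twist[OF u(1) v(1)] Ybar_one[OF Y_graded[OF u(1) v(1)]] by (simp add: Ybar.Y_left.scale)
  then have "Ybar u (-1) (Ybar v n one) - Ybar v n (Ybar u (-1) one)
      = twist g h *s Sum_any (\<lambda>i::nat. (of_int (-1) gchoose i :: complex) *s
          Y (Y u (int i) v) (-1 + n - int i) one)"
    unfolding Ybar.commutator_formula[symmetric] by (simp add: Sum_any_scale[symmetric] mult.commute)
  then have "twist g h *s (Y u (-1) (Y v n one) - Y v n (Y u (-1) one))
      = Ybar u (-1) (Ybar v n one) - Ybar v n (Ybar u (-1) one)"
    using commutator_formula[of "-1" u v n one] by simp
  also have "\<dots> = twist g h *s Y u (-1) (Y v n one) - twist h g *s Y v n (Y u (-1) one)"
    using Ybar_one[OF u(1)] Ybar_one[OF v(1)] Ybar_twist[OF u(1) Y_graded[OF v(1) one_in_Vg0]]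
      Ybar_twist[OF v(1) Y_graded[OF u(1) one_in_Vg0]] by simp
  finally have "twist g h *s Y v n u = twist h g *s Y v n u"
    by (simp add: Y_creation scale_right_diff_distrib)
  then show ?thesis using n by (metis scale_cancel_right)
qed

text \<open>Associativity, in the form of the Borcherds identity with \<open>l = j\<close> the top mode of \<open>u\<close> on
  \<open>v\<close> and \<open>m = M\<close> beyond the modes of \<open>u\<close> on \<open>w\<close>: the left side reduces to
  \<open>(u\<^sub>j v)\<^sub>q w \<noteq> 0\<close>, and passing to \<open>Ybar\<close> multiplies the two sides by the two
  products of twists.\<close>

lemma twist_cocycle: "twist g h * twist (g + h) k = twist h k * twist g (h + k)"
proof -
  obtain u where u: "u \<in> Vg g" "u \<noteq> 0" using Vg_nonzero_element .
  obtain v where v: "v \<in> Vg h" "v \<noteq> 0" using Vg_nonzero_element .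
  obtain w where w: "w \<in> Vg k" "w \<noteq> 0" using Vg_nonzero_element .
  obtain j0 where "Y u j0 v \<noteq> 0" using simple_modes_nonzero[OF simple_Y u(2) v(2)] .
  moreover obtain N where "\<forall>n\<ge>N. Y u n v = 0" using Y_truncation by blast
  ultimately obtain j where j: "Y u j v \<noteq> 0" "\<And>j'. j' > j \<Longrightarrow> Y u j' v = 0"
    using int_max_nonzero[of "\<lambda>j. Y u j v"] by metis
  obtain q where q: "Y (Y u j v) q w \<noteq> 0" using simple_modes_nonzero[OF simple_Y j(1) w(2)] .
  obtain M where M: "\<forall>n\<ge>M. Y u n w = 0" using Y_truncation by blast
  define L where "L Z = Sum_any (\<lambda>i::nat. (of_int M gchoose i :: complex) *s Z (Z u (j + int i) v) (q - int i) w)"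
    for Z :: "'v \<Rightarrow> int \<Rightarrow> 'v \<Rightarrow> 'v"
  define R where "R Z = Sum_any (\<lambda>i::nat. ((-1) ^ i * (of_int j gchoose i) :: complex) *s
       (Z u (M + j - int i) (Z v (q - M + int i) w)
        - ((-1::complex) powi j) *s Z v (q - M + j - int i) (Z u (M + int i) w)))"
    for Z :: "'v \<Rightarrow> int \<Rightarrow> 'v \<Rightarrow> 'v"
  have "L Y = R Y" "L Ybar = R Ybar"
    unfolding L_def R_def using borcherds[of M u j v "q - M" w] Ybar.borcherds[of M u j v "q - M" w]
    by simp_all
  moreover have "L Y = Y (Y u j v) q w"
    unfolding L_def using j(2) by (subst Sum_any_eq_single[of 0]) auto
  moreover have "L Ybar = (twist g h * twist (g + h) k) *s L Y"
    unfolding L_def using Ybar_twist[OF u(1) v(1)] Ybar_twist[OF Y_graded[OF u(1) v(1)] w(1)]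
    by (simp add: Sum_any_scale[symmetric] Ybar.Y_left.scale mult_ac)
  moreover have "R Ybar = (twist h k * twist g (h + k)) *s R Y"
  proof -
    have "Ybar u (M + int i) w = 0" "Y u (M + int i) w = 0" for i
      using M Ybar_twist[OF u(1) w(1)] by simp_all
    then show ?thesis
      unfolding R_def using Ybar_twist[OF v(1) w(1)] Ybar_twist[OF u(1) Y_graded[OF v(1) w(1)]]
      by (simp add: Sum_any_scale[symmetric] Ybar.Y_right.scale mult_ac)
  qed
  ultimately have "(twist g h * twist (g + h) k) *s Y (Y u j v) q w = (twist h k * twist g (h + k)) *s Y (Y u j v) q w"
    by simp
  then show ?thesis using q by (metis scale_cancel_right)
qed

sublocale twist: symmetric_cocycle twist
  by unfold_locales (rule twist_nonzero twist_0_left twist_commute twist_cocycle)+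

lemma rescale_Y:
  assumes f: "\<And>g h. f (g + h) = twist g h * f g * f h"
  shows "rescale f (Y u n v) = Ybar (rescale f u) n (rescale f v)"
proof -
  have "Y u n v = (\<Sum>g | component u g \<noteq> 0. \<Sum>h | component v h \<noteq> 0. Y (component u g) n (component v h))"
    using bilinear_rescale_expand[of "\<lambda>u v. Y u n v" "\<lambda>_. 1" u "\<lambda>_. 1" v] clin_Y clin_Y_left
    by (simp add: rescale_one)
  then have "rescale f (Y u n v) = (\<Sum>g | component u g \<noteq> 0. \<Sum>h | component v h \<noteq> 0.
      rescale f (Y (component u g) n (component v h)))"
    by (simp add: rescale.sum)
  also have "\<dots> = (\<Sum>g | component u g \<noteq> 0. \<Sum>h | component v h \<noteq> 0.
      (f g * f h) *s Ybar (component u g) n (component v h))"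
  proof (intro sum.cong refl)
    fix g h
    have "rescale f (Y (component u g) n (component v h)) = f (g + h) *s Y (component u g) n (component v h)"
      by (rule rescale_homogeneous[OF Y_graded[OF component_in_Vg component_in_Vg]])
    then show "rescale f (Y (component u g) n (component v h))
        = (f g * f h) *s Ybar (component u g) n (component v h)"
      using Ybar_twist[OF component_in_Vg component_in_Vg] f by (simp add: mult_ac)
  qed
  also have "\<dots> = Ybar (rescale f u) n (rescale f v)"
    using bilinear_rescale_expand[of "\<lambda>u v. Ybar u n v" f u f v] Ybar.clin_Y Ybar.clin_Y_left by simp
  finally show ?thesis .
qed

lemma VOA_iso_rescale:
  obtains f where "VOA_iso scale Y one \<omega> Ybar one \<omega> (rescale f)"
proof -
  obtain f where f_nonzero: "\<And>g. f g \<noteq> 0" and f: "\<And>g h. f (g + h) = twist g h * f g * f h"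
    using twist.coboundary by blast
  have "f 0 * f 0 = f 0 * 1" using f[of 0 0] twist_0_left by simp
  then have f0: "f 0 = 1" using f_nonzero[of 0] by (metis mult_left_cancel)
  have "bij (rescale f)"
    by (rule o_bij[of "rescale (\<lambda>g. inverse (f g))"])
      (simp_all add: fun_eq_iff rescale_rescale f_nonzero rescale_one)
  moreover have "rescale f one = one" "rescale f \<omega> = \<omega>"
    using rescale_homogeneous[OF one_in_Vg0] rescale_homogeneous[OF omega_in_Vg0] f0 by simp_all
  ultimately have "VOA_iso scale Y one \<omega> Ybar one \<omega> (rescale f)"
    unfolding VOA_iso_def using clin_rescale rescale_Y[OF f] by blast
  then show ?thesis by (rule that)
qed

end

theorem proposition5p3:
  fixes sc :: "complex \<Rightarrow> 'v::ab_group_add \<Rightarrow> 'v"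
    and Y Ybar :: "'v \<Rightarrow> int \<Rightarrow> 'v \<Rightarrow> 'v"
    and one \<omega> :: 'v
    and Vg :: "'g::ab_group_add \<Rightarrow> 'v set"
  assumes "vector_space sc"
    and "simple_VOA sc Y one \<omega>"
    and "G_graded sc Y one \<omega> Vg"
    and "\<forall>g. Vg g \<noteq> {0}"
    and "\<forall>g h k. fusion_rule sc Y \<omega> (Vg 0) (Vg g) (Vg h) (Vg k) (if g + h = k then 1 else 0)"
    and "simple_VOA sc Ybar one \<omega>"
    and "\<forall>u\<in>Vg 0. Ybar u = Y u"
  shows "\<exists>\<phi>. VOA_iso sc Y one \<omega> Ybar one \<omega> \<phi>"
proof -
  interpret vector_space sc by fact
  interpret simple_current_pair sc Y one \<omega> Vg Ybar
    using assms by unfold_locales (simp_all add: simple_VOA_def)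
  obtain f where "VOA_iso sc Y one \<omega> Ybar one \<omega> (rescale f)" by (rule VOA_iso_rescale)
  then show ?thesis by blast
qed

end
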